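(* Let $X_n=(\mathbb{C}^n,\|\cdot\|)$ be a Banach space and let $J\subset\mathbb{N}_0^n$ be an index set of degree at most $m$. Then $$\max_{0\le k\le m}\boldsymbol{\lambda}\big(\mathcal{P}_{J(k)}(X_n)\big)\le\boldsymbol{\lambda}\big(\mathcal{P}_J(X_n)\big)\le(m+1)\max_{0\le k\le m}\boldsymbol{\lambda}\big(\mathcal{P}_{J(k)}(X_n)\big).$$ In particular, for any Banach sequence lattice $X$, $$\lim_{m\to\infty}\sup_{n\in\mathbb{N}}\frac{\boldsymbol{\lambda}\big(\mathcal{P}_{\le m}(X_n)\big)^{1/m}}{\big(\max_{0\le k\le m}\boldsymbol{\lambda}(\mathcal{P}_k(X_n))\big)^{1/m}}=1.$$
   Context: $J(k)=\{\alpha\in J:|\alpha|=k\}$; $J$ has degree at most $m$ if $|\alpha|\le m$ for all $\alpha\in J$. $\mathcal{P}_J(X_n)$ is the space of polynomials $\sum_{\alpha\in J}c_\alpha z^\alpha$ on $\mathbb{C}^n$ with norm $\sup_{z\in B_{X_n}}|P(z)|$, $B_{X_n}$ the open unit ball; $\mathcal{P}_{\le m}$ and $\mathcal{P}_k$ correspond to $J=\{|\alpha|\le m\}$ and $J=\{|\alpha|=k\}$. $\boldsymbol{\lambda}$ is the projection constant. For a Banach sequence lattice $X$ (Banach space of complex sequences with the ideal property), $X_n$ is $\mathbb{C}^n$ with $\|z\|=\|\sum_{k\le n}|z_k|e_k\|_X$. *)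

theory Defs
  imports "HOL-Analysis.Analysis"
begin

text \<open>Points of C^n are modelled as functions nat => complex vanishing at indices >= n
  (coordinates 0..n-1); multi-indices in N_0^n as functions nat => nat vanishing at >= n.\<close>

definition Cn :: "nat \<Rightarrow> (nat \<Rightarrow> complex) set" where
  "Cn n = {z. \<forall>i\<ge>n. z i = 0}"

definition mindex :: "nat \<Rightarrow> (nat \<Rightarrow> nat) set" where
  "mindex n = {\<alpha>. \<forall>i\<ge>n. \<alpha> i = 0}"

definition mdeg :: "nat \<Rightarrow> (nat \<Rightarrow> nat) \<Rightarrow> nat" where
  "mdeg n \<alpha> = (\<Sum>i<n. \<alpha> i)"

definition monom :: "nat \<Rightarrow> (nat \<Rightarrow> nat) \<Rightarrow> (nat \<Rightarrow> complex) \<Rightarrow> complex" where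
  "monom n \<alpha> z = (\<Prod>i<n. z i ^ \<alpha> i)"

definition Jk :: "nat \<Rightarrow> (nat \<Rightarrow> nat) set \<Rightarrow> nat \<Rightarrow> (nat \<Rightarrow> nat) set" where
  "Jk n J k = {\<alpha> \<in> J. mdeg n \<alpha> = k}"

definition norm_on :: "nat \<Rightarrow> ((nat \<Rightarrow> complex) \<Rightarrow> real) \<Rightarrow> bool" where
  "norm_on n N \<longleftrightarrow>
     (\<forall>z\<in>Cn n. N z = 0 \<longleftrightarrow> z = (\<lambda>i. 0)) \<and>
     (\<forall>z\<in>Cn n. \<forall>c. N (\<lambda>i. c * z i) = cmod c * N z) \<and>
     (\<forall>z\<in>Cn n. \<forall>w\<in>Cn n. N (\<lambda>i. z i + w i) \<le> N z + N w)"

definition unit_ball :: "nat \<Rightarrow> ((nat \<Rightarrow> complex) \<Rightarrow> real) \<Rightarrow> (nat \<Rightarrow> complex) set" where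
  "unit_ball n N = {z \<in> Cn n. N z < 1}"

text \<open>l_infty(B): bounded functions on B (extended by 0 outside B), with the sup norm.\<close>
definition linfty :: "'a set \<Rightarrow> ('a \<Rightarrow> complex) set" where
  "linfty B = {f. (\<forall>z. z \<notin> B \<longrightarrow> f z = 0) \<and> bounded (f ` B)}"

definition supnorm :: "'a set \<Rightarrow> ('a \<Rightarrow> complex) \<Rightarrow> real" where
  "supnorm B f = (SUP z\<in>B. cmod (f z))"

text \<open>P_J(X_n), isometrically realised inside l_infty(B_{X_n}) by restriction to the open unit ball
  (its norm is by definition the sup norm over the ball).\<close>
definition poly_space :: "nat \<Rightarrow> ((nat \<Rightarrow> complex) \<Rightarrow> real) \<Rightarrow> (nat \<Rightarrow> nat) set
    \<Rightarrow> ((nat \<Rightarrow> complex) \<Rightarrow> complex) set" where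
  "poly_space n N J = {f. \<exists>c. \<forall>z. f z =
      (if z \<in> unit_ball n N then (\<Sum>\<alpha>\<in>J. c \<alpha> * monom n \<alpha> z) else 0)}"

text \<open>Since l_infty(B) is injective and Y
  sits isometrically in it, this equals the (absolute) projection constant of Y.\<close>
definition proj_const :: "'a set \<Rightarrow> ('a \<Rightarrow> complex) set \<Rightarrow> real" where
  "proj_const B Y = Inf {C. 0 \<le> C \<and> (\<exists>Q.
      (\<forall>f\<in>linfty B. Q f \<in> Y) \<and>
      (\<forall>f\<in>linfty B. \<forall>g\<in>linfty B. Q (\<lambda>z. f z + g z) = (\<lambda>z. Q f z + Q g z)) \<and>
      (\<forall>f\<in>linfty B. \<forall>c. Q (\<lambda>z. c * f z) = (\<lambda>z. c * Q f z)) \<and>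
      (\<forall>y\<in>Y. Q y = y) \<and>
      (\<forall>f\<in>linfty B. supnorm B (Q f) \<le> C * supnorm B f))}"

definition lambdaP :: "nat \<Rightarrow> ((nat \<Rightarrow> complex) \<Rightarrow> real) \<Rightarrow> (nat \<Rightarrow> nat) set \<Rightarrow> real" where
  "lambdaP n N J = proj_const (unit_ball n N) (poly_space n N J)"

definition banach_seq_lattice :: "(nat \<Rightarrow> complex) set \<Rightarrow> ((nat \<Rightarrow> complex) \<Rightarrow> real) \<Rightarrow> bool" where
  "banach_seq_lattice X NX \<longleftrightarrow>
     (\<lambda>i. 0) \<in> X \<and>
     (\<forall>x\<in>X. \<forall>y\<in>X. (\<lambda>i. x i + y i) \<in> X) \<and>
     (\<forall>x\<in>X. \<forall>c. (\<lambda>i. c * x i) \<in> X) \<and>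
     (\<forall>x\<in>X. NX x = 0 \<longleftrightarrow> x = (\<lambda>i. 0)) \<and>
     (\<forall>x\<in>X. \<forall>c. NX (\<lambda>i. c * x i) = cmod c * NX x) \<and>
     (\<forall>x\<in>X. \<forall>y\<in>X. NX (\<lambda>i. x i + y i) \<le> NX x + NX y) \<and>
     (\<forall>s. (\<forall>k. s k \<in> X) \<and> (\<forall>e>0. \<exists>M. \<forall>p\<ge>M. \<forall>q\<ge>M. NX (\<lambda>i. s p i - s q i) < e)
          \<longrightarrow> (\<exists>x\<in>X. (\<lambda>k. NX (\<lambda>i. s k i - x i)) \<longlonglongrightarrow> 0)) \<and>
     (\<forall>x\<in>X. \<forall>y. (\<forall>i. cmod (y i) \<le> cmod (x i)) \<longrightarrow> y \<in> X \<and> NX y \<le> NX x) \<and>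
     (\<forall>k. (\<lambda>i. if i = k then 1 else 0) \<in> X)"

definition Xn_norm :: "((nat \<Rightarrow> complex) \<Rightarrow> real) \<Rightarrow> nat \<Rightarrow> (nat \<Rightarrow> complex) \<Rightarrow> real" where
  "Xn_norm NX n z = NX (\<lambda>k. if k < n then complex_of_real (cmod (z k)) else 0)"

definition Ple :: "nat \<Rightarrow> nat \<Rightarrow> (nat \<Rightarrow> nat) set" where
  "Ple n m = {\<alpha> \<in> mindex n. mdeg n \<alpha> \<le> m}"

definition Peq :: "nat \<Rightarrow> nat \<Rightarrow> (nat \<Rightarrow> nat) set" where
  "Peq n k = {\<alpha> \<in> mindex n. mdeg n \<alpha> = k}"

end

theory Submission
  imports Defs "HOL-Real_Asymp.Real_Asymp"
begin

(* Let B be the open unit ball of X_n; it is circled, and the coordinates are bounded on it.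
   For a primitive (m+1)-th root of unity w, averaging f over the rotations z -> w^j z with
   weights w^(-jk) is a linear contraction E_k of l_infty(B) that sends every polynomial of degree
   at most m to its k-homogeneous part.  So E_k o Q is a projection onto P_{J(k)} of norm at most
   ||Q|| whenever Q projects onto P_J, which gives the lower bound; and sum_k Q_k o E_k projects
   onto P_J with norm at most sum_k ||Q_k|| whenever Q_k projects onto P_{J(k)}, which gives the
   upper bound.  In the second statement J = {|alpha| <= m}, so J(k) = {|alpha| = k}, and every
   projection constant is at least 1; hence the quotient lies between 1 and (m+1)^(1/m) -> 1. *)

section \<open>Norms on C^n\<close>

definition unit_vec :: "nat \<Rightarrow> nat \<Rightarrow> complex" where
  "unit_vec k = (\<lambda>i. if i = k then 1 else 0)"

lemma unit_vec_in_Cn: "k < n \<Longrightarrow> unit_vec k \<in> Cn n"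
  by (simp add: unit_vec_def Cn_def)

lemma norm_on_add_le:
  assumes "norm_on n N" "z \<in> Cn n" "w \<in> Cn n"
  shows "N (\<lambda>i. z i + w i) \<le> N z + N w"
  using assms unfolding norm_on_def by blast

lemma norm_on_scale:
  assumes "norm_on n N" "z \<in> Cn n"
  shows "N (\<lambda>i. c * z i) = cmod c * N z"
  using assms unfolding norm_on_def by blast

lemma norm_on_zero: "norm_on n N \<Longrightarrow> N (\<lambda>i. 0) = 0"
  unfolding norm_on_def Cn_def by auto

lemma norm_on_nonneg:
  assumes "norm_on n N" "z \<in> Cn n"
  shows "0 \<le> N z"
proof -
  have "(\<lambda>i. - z i) \<in> Cn n" using assms(2) by (auto simp: Cn_def)
  then have "N (\<lambda>i. 0) \<le> N z + N (\<lambda>i. - z i)"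
    using norm_on_add_le[OF assms] by fastforce
  moreover have "N (\<lambda>i. - z i) = N z" using norm_on_scale[OF assms, of "-1"] by simp
  ultimately show ?thesis using norm_on_zero[OF assms(1)] by simp
qed

lemma norm_on_le_l1:
  assumes "norm_on n N" "z \<in> Cn n"
  shows "N z \<le> (\<Sum>i<n. cmod (z i) * N (unit_vec i))"
proof -
  have "N (\<lambda>i. if i < k then z i else 0) \<le> (\<Sum>i<k. cmod (z i) * N (unit_vec i))" if "k \<le> n" for k
    using that
  proof (induction k)
    case 0
    then show ?case using norm_on_zero[OF assms(1)] by simp
  next
    case (Suc k)
    have split: "(\<lambda>i. if i < Suc k then z i else 0)
        = (\<lambda>i. (if i < k then z i else 0) + z k * unit_vec k i)"
      by (auto simp: unit_vec_def less_Suc_eq)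
    have "(\<lambda>i. if i < k then z i else 0) \<in> Cn n" "(\<lambda>i. z k * unit_vec k i) \<in> Cn n"
      using Suc.prems by (auto simp: Cn_def unit_vec_def)
    then have "N (\<lambda>i. if i < Suc k then z i else 0)
        \<le> N (\<lambda>i. if i < k then z i else 0) + cmod (z k) * N (unit_vec k)"
      unfolding split using norm_on_add_le[OF assms(1)] norm_on_scale[OF assms(1) unit_vec_in_Cn]
        Suc.prems by fastforce
    then show ?case using Suc by simp
  qed
  moreover have "(\<lambda>i. if i < n then z i else 0) = z"
    using assms(2) by (auto simp: Cn_def)
  ultimately show ?thesis by fastforce
qed

lemma norm_on_dist_le:
  assumes "norm_on n N" "z \<in> Cn n" "x \<in> Cn n"
  shows "\<bar>N z - N x\<bar> \<le> (\<Sum>i<n. cmod (z i - x i) * N (unit_vec i))"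
proof -
  have diff: "(\<lambda>i. z i - x i) \<in> Cn n" "(\<lambda>i. x i - z i) \<in> Cn n"
    using assms(2,3) by (auto simp: Cn_def)
  have "N z \<le> N x + N (\<lambda>i. z i - x i)"
    using norm_on_add_le[OF assms(1,3) diff(1)] by simp
  moreover have "N x \<le> N z + N (\<lambda>i. x i - z i)"
    using norm_on_add_le[OF assms(1,2) diff(2)] by simp
  moreover have "N (\<lambda>i. x i - z i) = N (\<lambda>i. z i - x i)"
    using norm_on_scale[OF assms(1) diff(1), of "-1"] by simp
  ultimately show ?thesis using norm_on_le_l1[OF assms(1) diff(1)] by linarith
qed

lemma norm_on_continuous:
  assumes "norm_on n N"
  shows "continuous_on (Cn n) N"
  unfolding continuous_on_def
proof
  fix x assume x: "x \<in> Cn n"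
  define g where "g = (\<lambda>z::nat\<Rightarrow>complex. \<Sum>i<n. cmod (z i - x i) * N (unit_vec i))"
  have "continuous_on UNIV g" unfolding g_def
    by (intro continuous_intros continuous_on_product_then_coordinatewise continuous_on_id)
  then have "(g \<longlongrightarrow> g x) (at x within Cn n)"
    by (meson UNIV_I continuous_on_def tendsto_within_subset top_greatest)
  then have "(g \<longlongrightarrow> 0) (at x within Cn n)" by (simp add: g_def)
  then have "((\<lambda>z. N z - N x) \<longlongrightarrow> 0) (at x within Cn n)"
    by (rule Lim_null_comparison[rotated])
       (use norm_on_dist_le[OF assms _ x] in \<open>auto simp: eventually_at_filter g_def\<close>)
  then show "(N \<longlongrightarrow> N x) (at x within Cn n)" by (simp add: LIM_zero_iff)
qed

lemma compact_l1_sphere: "compact {z \<in> Cn n. (\<Sum>i<n. cmod (z i)) = 1}"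
proof -
  define K where "K = (\<lambda>i::nat. if i < n then cball (0::complex) 1 else {0})"
  have "compactin (product_topology (\<lambda>i. euclidean) UNIV) (PiE UNIV K)"
    unfolding compactin_PiE by (auto simp: K_def)
  then have "compact (PiE UNIV K)" by (simp add: euclidean_product_topology)
  moreover have "closed {z::nat\<Rightarrow>complex. (\<Sum>i<n. cmod (z i)) = 1}"
    by (intro closed_Collect_eq continuous_intros continuous_on_product_then_coordinatewise
        continuous_on_id)
  ultimately have "compact (PiE UNIV K \<inter> {z. (\<Sum>i<n. cmod (z i)) = 1})"
    by (rule compact_Int_closed)
  moreover have "PiE UNIV K \<inter> {z. (\<Sum>i<n. cmod (z i)) = 1} = {z \<in> Cn n. (\<Sum>i<n. cmod (z i)) = 1}"
  proof (intro equalityI subsetI)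
    fix z assume z: "z \<in> PiE UNIV K \<inter> {z. (\<Sum>i<n. cmod (z i)) = 1}"
    then have "z i \<in> K i" for i by (auto simp: PiE_iff)
    then have "z i = 0" if "i \<ge> n" for i using that by (metis K_def not_le singletonD)
    then show "z \<in> {z \<in> Cn n. (\<Sum>i<n. cmod (z i)) = 1}" using z by (simp add: Cn_def)
  next
    fix z assume z: "z \<in> {z \<in> Cn n. (\<Sum>i<n. cmod (z i)) = 1}"
    have "cmod (z i) \<le> 1" if "i < n" for i
      using member_le_sum[of i "{..<n}" "\<lambda>i. cmod (z i)"] z that by auto
    then show "z \<in> PiE UNIV K \<inter> {z. (\<Sum>i<n. cmod (z i)) = 1}"
      using z by (auto simp: Cn_def K_def PiE_iff)
  qed
  ultimately show ?thesis by simp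
qed

lemma norm_on_bounded_below_on_l1_sphere:
  assumes "norm_on n N" "n \<noteq> 0"
  obtains c where "c > 0" "\<And>z. z \<in> Cn n \<Longrightarrow> (\<Sum>i<n. cmod (z i)) = 1 \<Longrightarrow> c \<le> N z"
proof -
  define S where "S = {z \<in> Cn n. (\<Sum>i<n. cmod (z i)) = 1}"
  have "unit_vec 0 \<in> S"
    using assms(2) by (simp add: S_def unit_vec_def Cn_def sum.delta[of "{..<n}" 0 "\<lambda>_. 1"]
        if_distrib cong: if_cong)
  moreover have "continuous_on S N"
    using norm_on_continuous[OF assms(1)] by (rule continuous_on_subset) (auto simp: S_def)
  ultimately obtain x\<^sub>0 where x\<^sub>0: "x\<^sub>0 \<in> S" "\<And>y. y \<in> S \<Longrightarrow> N x\<^sub>0 \<le> N y"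
    using continuous_attains_inf[of S N] compact_l1_sphere by (auto simp: S_def)
  have "x\<^sub>0 \<in> Cn n" "x\<^sub>0 \<noteq> (\<lambda>i. 0)" using x\<^sub>0(1) by (auto simp: S_def)
  then have "N x\<^sub>0 > 0"
    using assms(1) norm_on_nonneg[OF assms(1)] unfolding norm_on_def by (metis order_le_less)
  then show ?thesis using that x\<^sub>0(2) by (simp add: S_def)
qed

lemma norm_on_l1_lower_bound:
  assumes "norm_on n N"
  obtains c where "c > 0" "\<And>z. z \<in> Cn n \<Longrightarrow> c * (\<Sum>i<n. cmod (z i)) \<le> N z"
proof (cases "n = 0")
  case True
  then show ?thesis using that[of 1] norm_on_nonneg[OF assms] by simp
next
  case False
  obtain c where c: "c > 0" "\<And>z. z \<in> Cn n \<Longrightarrow> (\<Sum>i<n. cmod (z i)) = 1 \<Longrightarrow> c \<le> N z"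
    by (rule norm_on_bounded_below_on_l1_sphere[OF assms False]) blast
  have "c * (\<Sum>i<n. cmod (z i)) \<le> N z" if z: "z \<in> Cn n" for z
  proof (cases "(\<Sum>i<n. cmod (z i)) = 0")
    case True
    then show ?thesis using norm_on_nonneg[OF assms z] by simp
  next
    case False
    define s where "s = (\<Sum>i<n. cmod (z i))"
    have s: "s > 0" using False by (simp add: s_def order_le_neq_trans[OF sum_nonneg])
    define w where "w = (\<lambda>i. z i / of_real s)"
    have "cmod (w i) = cmod (z i) / s" for i using s by (simp add: w_def norm_divide)
    then have "(\<Sum>i<n. cmod (w i)) = 1" using s by (simp add: sum_divide_distrib[symmetric] s_def)
    moreover have w: "w \<in> Cn n" using z by (simp add: Cn_def w_def)
    ultimately have "c \<le> N w" by (rule c(2)[rotated])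
    moreover have "N z = s * N w"
      using norm_on_scale[OF assms w, of "of_real s"] s by (simp add: w_def)
    ultimately show ?thesis using s by (simp add: s_def[symmetric])
  qed
  then show ?thesis using that[OF c(1)] by blast
qed

lemma unit_ball_coords_bounded:
  assumes "norm_on n N"
  obtains R where "R > 0" "\<And>z i. z \<in> unit_ball n N \<Longrightarrow> cmod (z i) \<le> R"
proof -
  obtain c where c: "c > 0" "\<And>z. z \<in> Cn n \<Longrightarrow> c * (\<Sum>i<n. cmod (z i)) \<le> N z"
    using norm_on_l1_lower_bound[OF assms] by blast
  have "cmod (z i) \<le> 1 / c" if z: "z \<in> unit_ball n N" for z i
  proof (cases "i < n")
    case True
    have "c * cmod (z i) \<le> c * (\<Sum>i<n. cmod (z i))"
      using True c(1) by (intro mult_left_mono member_le_sum) auto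
    also have "\<dots> < 1" using c(2) z by (fastforce simp: unit_ball_def)
    finally show ?thesis using c(1) by (simp add: field_simps)
  next
    case False
    then show ?thesis using z c(1) by (simp add: unit_ball_def Cn_def)
  qed
  then show ?thesis using that[of "1 / c"] c(1) by simp
qed

lemma polydisc_subset_unit_ball:
  assumes "norm_on n N"
  obtains r where "r > 0" "\<And>z. z \<in> Cn n \<Longrightarrow> (\<forall>i<n. cmod (z i) \<le> r) \<Longrightarrow> z \<in> unit_ball n N"
proof
  define T where "T = (\<Sum>i<n. N (unit_vec i))"
  have T: "T \<ge> 0"
    unfolding T_def by (intro sum_nonneg norm_on_nonneg[OF assms] unit_vec_in_Cn) simp
  then show "1 / (T + 1) > 0" by simp
  fix z assume z: "z \<in> Cn n" "\<forall>i<n. cmod (z i) \<le> 1 / (T + 1)"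
  have "N z \<le> (\<Sum>i<n. cmod (z i) * N (unit_vec i))" by (rule norm_on_le_l1[OF assms z(1)])
  also have "\<dots> \<le> (\<Sum>i<n. 1 / (T + 1) * N (unit_vec i))"
    using z(2) norm_on_nonneg[OF assms unit_vec_in_Cn] by (intro sum_mono mult_right_mono) auto
  also have "\<dots> = T / (T + 1)" by (simp add: T_def sum_divide_distrib)
  also have "\<dots> < 1" using T by simp
  finally show "z \<in> unit_ball n N" using z(1) by (simp add: unit_ball_def)
qed

lemma zero_in_unit_ball: "norm_on n N \<Longrightarrow> (\<lambda>i. 0) \<in> unit_ball n N"
  by (simp add: unit_ball_def Cn_def norm_on_zero)

definition circled :: "('i \<Rightarrow> complex) set \<Rightarrow> bool" where
  "circled B \<longleftrightarrow> (\<forall>c z. cmod c = 1 \<longrightarrow> ((\<lambda>i. c * z i) \<in> B \<longleftrightarrow> z \<in> B))"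

lemma circled_unit_ball:
  assumes "norm_on n N"
  shows "circled (unit_ball n N)"
  unfolding circled_def
proof (intro allI impI)
  fix c :: complex and z assume c: "cmod c = 1"
  then have "(\<lambda>i. c * z i) \<in> Cn n \<longleftrightarrow> z \<in> Cn n" by (auto simp: Cn_def)
  then show "(\<lambda>i. c * z i) \<in> unit_ball n N \<longleftrightarrow> z \<in> unit_ball n N"
    using norm_on_scale[OF assms _, of z c] c by (auto simp: unit_ball_def)
qed

section \<open>Projection constants of subspaces of l_infty(B)\<close>

lemma linfty_iff: "f \<in> linfty B \<longleftrightarrow> (\<forall>z. z \<notin> B \<longrightarrow> f z = 0) \<and> (\<exists>K. \<forall>z\<in>B. cmod (f z) \<le> K)"
  unfolding linfty_def bounded_iff by auto

lemma supnorm_upper: "f \<in> linfty B \<Longrightarrow> z \<in> B \<Longrightarrow> cmod (f z) \<le> supnorm B f"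
  unfolding supnorm_def linfty_iff by (rule cSUP_upper) (auto simp: bdd_above_def)

lemma supnorm_least: "B \<noteq> {} \<Longrightarrow> (\<And>z. z \<in> B \<Longrightarrow> cmod (f z) \<le> K) \<Longrightarrow> supnorm B f \<le> K"
  unfolding supnorm_def by (rule cSUP_least) auto

lemma supnorm_sum_le:
  assumes "B \<noteq> {}" "\<And>k. k \<in> K \<Longrightarrow> g k \<in> linfty B"
  shows "supnorm B (\<lambda>z. \<Sum>k\<in>K. g k z) \<le> (\<Sum>k\<in>K. supnorm B (g k))"
  using supnorm_upper[OF assms(2)]
  by (intro supnorm_least[OF assms(1)] order_trans[OF norm_sum] sum_mono) auto

definition linfty_linear :: "'a set \<Rightarrow> (('a \<Rightarrow> complex) \<Rightarrow> 'a \<Rightarrow> complex) \<Rightarrow> bool" where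
  "linfty_linear B T \<longleftrightarrow>
     (\<forall>f\<in>linfty B. \<forall>g\<in>linfty B. T (\<lambda>z. f z + g z) = (\<lambda>z. T f z + T g z)) \<and>
     (\<forall>f\<in>linfty B. \<forall>c. T (\<lambda>z. c * f z) = (\<lambda>z. c * T f z))"

lemma linfty_linear_comp:
  assumes "linfty_linear B S" "linfty_linear B T" "\<And>f. f \<in> linfty B \<Longrightarrow> T f \<in> linfty B"
  shows "linfty_linear B (\<lambda>f. S (T f))"
  using assms by (simp add: linfty_linear_def)

lemma linfty_linear_sum:
  assumes "\<And>k. k \<in> K \<Longrightarrow> linfty_linear B (S k)"
  shows "linfty_linear B (\<lambda>f z. \<Sum>k\<in>K. S k f z)"
  unfolding linfty_linear_def
proof (intro conjI ballI allI)
  fix f g assume "f \<in> linfty B" "g \<in> linfty B"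
  then have "S k (\<lambda>z. f z + g z) = (\<lambda>z. S k f z + S k g z)" if "k \<in> K" for k
    using assms[OF that] by (simp add: linfty_linear_def)
  then show "(\<lambda>z. \<Sum>k\<in>K. S k (\<lambda>z. f z + g z) z) = (\<lambda>z. (\<Sum>k\<in>K. S k f z) + (\<Sum>k\<in>K. S k g z))"
    by (simp add: sum.distrib cong: sum.cong)
next
  fix f c assume "f \<in> linfty B"
  then have "S k (\<lambda>z. c * f z) = (\<lambda>z. c * S k f z)" if "k \<in> K" for k
    using assms[OF that] by (simp add: linfty_linear_def)
  then show "(\<lambda>z. \<Sum>k\<in>K. S k (\<lambda>z. c * f z) z) = (\<lambda>z. c * (\<Sum>k\<in>K. S k f z))"
    by (simp add: sum_distrib_left cong: sum.cong)
qed

definition linfty_contraction :: "'a set \<Rightarrow> (('a \<Rightarrow> complex) \<Rightarrow> 'a \<Rightarrow> complex) \<Rightarrow> bool" where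
  "linfty_contraction B T \<longleftrightarrow> linfty_linear B T \<and>
     (\<forall>f\<in>linfty B. T f \<in> linfty B \<and> supnorm B (T f) \<le> supnorm B f)"

definition is_projection ::
    "'a set \<Rightarrow> ('a \<Rightarrow> complex) set \<Rightarrow> (('a \<Rightarrow> complex) \<Rightarrow> 'a \<Rightarrow> complex) \<Rightarrow> real \<Rightarrow> bool" where
  "is_projection B Y Q C \<longleftrightarrow> linfty_linear B Q \<and> (\<forall>f\<in>linfty B. Q f \<in> Y) \<and> (\<forall>y\<in>Y. Q y = y) \<and>
     (\<forall>f\<in>linfty B. supnorm B (Q f) \<le> C * supnorm B f)"

definition projection_norms :: "'a set \<Rightarrow> ('a \<Rightarrow> complex) set \<Rightarrow> real set" where
  "projection_norms B Y = {C. 0 \<le> C \<and> (\<exists>Q. is_projection B Y Q C)}"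

lemma proj_const_eq_Inf: "proj_const B Y = Inf (projection_norms B Y)"
  unfolding proj_const_def projection_norms_def is_projection_def linfty_linear_def
  by (intro arg_cong[where f = Inf] Collect_cong) blast

lemma bdd_below_projection_norms: "bdd_below (projection_norms B Y)"
  unfolding projection_norms_def by (rule bdd_belowI[of _ 0]) simp

lemma proj_const_le: "is_projection B Y Q C \<Longrightarrow> 0 \<le> C \<Longrightarrow> proj_const B Y \<le> C"
  unfolding proj_const_eq_Inf
  by (rule cInf_lower[OF _ bdd_below_projection_norms]) (auto simp: projection_norms_def)

lemma proj_const_approx:
  assumes "projection_norms B Y \<noteq> {}" "e > 0"
  obtains Q C where "0 \<le> C" "is_projection B Y Q C" "C < proj_const B Y + e"
proof -
  have "Inf (projection_norms B Y) < proj_const B Y + e"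
    using assms(2) by (simp add: proj_const_eq_Inf)
  then show ?thesis using cInf_lessD[OF assms(1)] that by (fastforce simp: projection_norms_def)
qed

lemma one_le_proj_const:
  assumes "projection_norms B Y \<noteq> {}" "y \<in> Y" "y \<in> linfty B" "z \<in> B" "y z \<noteq> 0"
  shows "1 \<le> proj_const B Y"
  unfolding proj_const_eq_Inf
proof (rule cInf_greatest[OF assms(1)])
  fix C assume "C \<in> projection_norms B Y"
  then obtain Q where "is_projection B Y Q C" by (auto simp: projection_norms_def)
  then have "supnorm B y \<le> C * supnorm B y"
    using assms(2,3) unfolding is_projection_def by metis
  moreover have "0 < supnorm B y"
    using supnorm_upper[OF assms(3,4)] assms(5) by (meson order_less_le_trans zero_less_norm_iff)
  ultimately show "1 \<le> C" by simp
qed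

lemma proj_const_mono_retraction:
  assumes T: "linfty_contraction B T" and Y: "Y \<subseteq> linfty B" "Y' \<subseteq> Y"
    and TY: "\<And>y. y \<in> Y \<Longrightarrow> T y \<in> Y'" and TY': "\<And>y. y \<in> Y' \<Longrightarrow> T y = y"
    and ne: "projection_norms B Y \<noteq> {}"
  shows "proj_const B Y' \<le> proj_const B Y"
  unfolding proj_const_eq_Inf
proof (rule cInf_superset_mono[OF ne bdd_below_projection_norms], rule subsetI)
  fix C assume "C \<in> projection_norms B Y"
  then obtain Q where C: "0 \<le> C" and Q: "is_projection B Y Q C"
    by (auto simp: projection_norms_def)
  have QY: "Q f \<in> Y" if "f \<in> linfty B" for f using Q that by (simp add: is_projection_def)
  have "is_projection B Y' (\<lambda>f. T (Q f)) C"
    unfolding is_projection_def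
  proof (intro conjI ballI)
    have "linfty_linear B T" "linfty_linear B Q"
      using T Q by (simp_all add: linfty_contraction_def is_projection_def)
    then show "linfty_linear B (\<lambda>f. T (Q f))" by (rule linfty_linear_comp) (use QY Y(1) in blast)
  next
    fix f assume f: "f \<in> linfty B"
    show "T (Q f) \<in> Y'" using TY QY[OF f] .
    have "supnorm B (T (Q f)) \<le> supnorm B (Q f)"
      using T QY[OF f] Y(1) by (auto simp: linfty_contraction_def)
    also have "\<dots> \<le> C * supnorm B f" using Q f by (simp add: is_projection_def)
    finally show "supnorm B (T (Q f)) \<le> C * supnorm B f" .
  next
    fix y assume "y \<in> Y'"
    then show "T (Q y) = y" using Q Y(2) TY' by (auto simp: is_projection_def)
  qed
  then show "C \<in> projection_norms B Y'" using C by (auto simp: projection_norms_def)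
qed

lemma is_projection_sum:
  assumes "B \<noteq> {}"
    and T: "\<And>k. k \<in> K \<Longrightarrow> linfty_contraction B (T k)"
    and Q: "\<And>k. k \<in> K \<Longrightarrow> is_projection B (V k) (Q k) (C k)"
    and C: "\<And>k. k \<in> K \<Longrightarrow> 0 \<le> C k"
    and V: "\<And>k. k \<in> K \<Longrightarrow> V k \<subseteq> linfty B"
    and TY: "\<And>k y. k \<in> K \<Longrightarrow> y \<in> Y \<Longrightarrow> T k y \<in> V k"
    and sum_T: "\<And>y. y \<in> Y \<Longrightarrow> (\<lambda>z. \<Sum>k\<in>K. T k y z) = y"
    and sum_V: "\<And>g. (\<And>k. k \<in> K \<Longrightarrow> g k \<in> V k) \<Longrightarrow> (\<lambda>z. \<Sum>k\<in>K. g k z) \<in> Y"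
  shows "is_projection B Y (\<lambda>f z. \<Sum>k\<in>K. Q k (T k f) z) (\<Sum>k\<in>K. C k)"
  unfolding is_projection_def
proof (intro conjI ballI)
  have TL: "T k f \<in> linfty B" if "k \<in> K" "f \<in> linfty B" for k f
    using T that by (simp add: linfty_contraction_def)
  have QV: "Q k f \<in> V k" if "k \<in> K" "f \<in> linfty B" for k f
    using Q that by (simp add: is_projection_def)
  show "linfty_linear B (\<lambda>f z. \<Sum>k\<in>K. Q k (T k f) z)"
  proof (rule linfty_linear_sum)
    fix k assume k: "k \<in> K"
    have "linfty_linear B (Q k)" "linfty_linear B (T k)"
      using Q[OF k] T[OF k] by (simp_all add: is_projection_def linfty_contraction_def)
    then show "linfty_linear B (\<lambda>f. Q k (T k f))" by (rule linfty_linear_comp) (rule TL[OF k])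
  qed
  fix f assume f: "f \<in> linfty B"
  show "(\<lambda>z. \<Sum>k\<in>K. Q k (T k f) z) \<in> Y" by (intro sum_V QV TL f)
  have "supnorm B (\<lambda>z. \<Sum>k\<in>K. Q k (T k f) z) \<le> (\<Sum>k\<in>K. supnorm B (Q k (T k f)))"
    using QV TL V f by (intro supnorm_sum_le[OF assms(1)]) blast
  also have "\<dots> \<le> (\<Sum>k\<in>K. C k * supnorm B f)"
  proof (rule sum_mono)
    fix k assume k: "k \<in> K"
    have "supnorm B (Q k (T k f)) \<le> C k * supnorm B (T k f)"
      using Q[OF k] TL[OF k f] by (simp add: is_projection_def)
    also have "\<dots> \<le> C k * supnorm B f"
      using T[OF k] f by (intro mult_left_mono[OF _ C[OF k]]) (simp add: linfty_contraction_def)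
    finally show "supnorm B (Q k (T k f)) \<le> C k * supnorm B f" .
  qed
  finally show "supnorm B (\<lambda>z. \<Sum>k\<in>K. Q k (T k f) z) \<le> (\<Sum>k\<in>K. C k) * supnorm B f"
    by (simp add: sum_distrib_right)
next
  fix y assume y: "y \<in> Y"
  have "Q k (T k y) = T k y" if "k \<in> K" for k
    using Q TY[OF that y] that by (simp add: is_projection_def)
  then show "(\<lambda>z. \<Sum>k\<in>K. Q k (T k y) z) = y" using sum_T[OF y] by (simp cong: sum.cong)
qed

lemma proj_const_sum_le:
  assumes "finite K" "B \<noteq> {}"
    and T: "\<And>k. k \<in> K \<Longrightarrow> linfty_contraction B (T k)"
    and ne: "\<And>k. k \<in> K \<Longrightarrow> projection_norms B (V k) \<noteq> {}"
    and V: "\<And>k. k \<in> K \<Longrightarrow> V k \<subseteq> linfty B"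
    and TY: "\<And>k y. k \<in> K \<Longrightarrow> y \<in> Y \<Longrightarrow> T k y \<in> V k"
    and sum_T: "\<And>y. y \<in> Y \<Longrightarrow> (\<lambda>z. \<Sum>k\<in>K. T k y z) = y"
    and sum_V: "\<And>g. (\<And>k. k \<in> K \<Longrightarrow> g k \<in> V k) \<Longrightarrow> (\<lambda>z. \<Sum>k\<in>K. g k z) \<in> Y"
  shows "proj_const B Y \<le> (\<Sum>k\<in>K. proj_const B (V k))"
proof (rule field_le_epsilon)
  fix e :: real assume e: "e > 0"
  define eps where "eps = e / (card K + 1)"
  have "eps > 0" using e by (simp add: eps_def)
  have "\<forall>k\<in>K. \<exists>Q C. 0 \<le> C \<and> is_projection B (V k) Q C \<and> C < proj_const B (V k) + eps"
    using proj_const_approx[OF ne \<open>eps > 0\<close>] by blast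
  from bchoice[OF this] obtain Q
    where "\<forall>k\<in>K. \<exists>C. 0 \<le> C \<and> is_projection B (V k) (Q k) C \<and> C < proj_const B (V k) + eps"
    by blast
  from bchoice[OF this] obtain C where QC: "\<And>k. k \<in> K \<Longrightarrow>
      0 \<le> C k \<and> is_projection B (V k) (Q k) (C k) \<and> C k < proj_const B (V k) + eps"
    by blast
  have "is_projection B Y (\<lambda>f z. \<Sum>k\<in>K. Q k (T k f) z) (\<Sum>k\<in>K. C k)"
    by (rule is_projection_sum[OF assms(2) T _ _ V TY sum_T sum_V]) (use QC in auto)
  then have "proj_const B Y \<le> (\<Sum>k\<in>K. C k)"
    by (rule proj_const_le) (use QC in \<open>auto intro: sum_nonneg\<close>)
  also have "\<dots> \<le> (\<Sum>k\<in>K. proj_const B (V k) + eps)" using QC by (intro sum_mono) (simp add: less_imp_le)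
  also have "\<dots> = (\<Sum>k\<in>K. proj_const B (V k)) + card K * eps" by (simp add: sum.distrib)
  also have "card K * eps \<le> e" using e by (simp add: eps_def field_simps)
  finally show "proj_const B Y \<le> (\<Sum>k\<in>K. proj_const B (V k)) + e" by simp
qed

section \<open>Polynomials on the unit ball\<close>

definition poly_fun :: "nat \<Rightarrow> ((nat \<Rightarrow> complex) \<Rightarrow> real) \<Rightarrow> ((nat \<Rightarrow> nat) \<Rightarrow> complex)
    \<Rightarrow> (nat \<Rightarrow> nat) set \<Rightarrow> (nat \<Rightarrow> complex) \<Rightarrow> complex" where
  "poly_fun n N c J = (\<lambda>z. if z \<in> unit_ball n N then (\<Sum>\<alpha>\<in>J. c \<alpha> * monom n \<alpha> z) else 0)"

lemma mem_poly_space_iff: "y \<in> poly_space n N J \<longleftrightarrow> (\<exists>c. y = poly_fun n N c J)"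
  unfolding poly_space_def poly_fun_def by (auto simp: fun_eq_iff)

lemma poly_fun_cong: "(\<And>\<alpha>. \<alpha> \<in> J \<Longrightarrow> c \<alpha> = c' \<alpha>) \<Longrightarrow> poly_fun n N c J = poly_fun n N c' J"
  unfolding poly_fun_def by (intro ext if_cong sum.cong) auto

lemma poly_fun_in_poly_space: "poly_fun n N c J \<in> poly_space n N J"
  unfolding mem_poly_space_iff by blast

lemma coord_le_mdeg: "i < n \<Longrightarrow> \<alpha> i \<le> mdeg n \<alpha>"
  unfolding mdeg_def by (rule member_le_sum) auto

lemma finite_Ple: "finite (Ple n m)"
proof -
  have inj: "inj_on (\<lambda>\<alpha>. map \<alpha> [0..<n]) (Ple n m)"
  proof (rule inj_onI)
    fix \<alpha> \<beta> assume "\<alpha> \<in> Ple n m" "\<beta> \<in> Ple n m" "map \<alpha> [0..<n] = map \<beta> [0..<n]"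
    then show "\<alpha> = \<beta>" by (auto simp: Ple_def mindex_def fun_eq_iff map_eq_conv)
  qed
  have "\<alpha> i \<le> m" if "\<alpha> \<in> Ple n m" "i < n" for \<alpha> i
    using coord_le_mdeg[OF that(2), of \<alpha>] that(1) by (simp add: Ple_def)
  then have "(\<lambda>\<alpha>. map \<alpha> [0..<n]) ` Ple n m \<subseteq> {xs. set xs \<subseteq> {..m} \<and> length xs = n}"
    by auto
  moreover have "finite {xs. set xs \<subseteq> {..m} \<and> length xs = n}"
    by (rule finite_lists_length_eq) simp
  ultimately have "finite ((\<lambda>\<alpha>. map \<alpha> [0..<n]) ` Ple n m)" by (rule finite_subset)
  then show ?thesis using inj by (rule finite_imageD)
qed

lemma finite_index_set:
  assumes "J \<subseteq> mindex n" "\<forall>\<alpha>\<in>J. mdeg n \<alpha> \<le> m"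
  shows "finite J"
  using finite_Ple by (rule finite_subset[rotated]) (use assms in \<open>auto simp: Ple_def\<close>)

lemma monom_scale: "monom n \<alpha> (\<lambda>i. c * z i) = c ^ mdeg n \<alpha> * monom n \<alpha> z"
  by (simp add: monom_def mdeg_def power_mult_distrib prod.distrib power_sum)

lemma norm_monom_le:
  assumes "\<And>i. cmod (z i) \<le> R"
  shows "cmod (monom n \<alpha> z) \<le> R ^ mdeg n \<alpha>"
proof -
  have "cmod (monom n \<alpha> z) = (\<Prod>i<n. cmod (z i) ^ \<alpha> i)"
    by (simp add: monom_def prod_norm[symmetric] norm_power)
  also have "\<dots> \<le> (\<Prod>i<n. R ^ \<alpha> i)"
    by (rule prod_mono) (use assms in \<open>auto intro: power_mono\<close>)
  also have "\<dots> = R ^ mdeg n \<alpha>" by (simp add: mdeg_def power_sum)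
  finally show ?thesis .
qed

lemma norm_poly_fun_le:
  assumes "\<And>i. cmod (z i) \<le> R"
  shows "cmod (poly_fun n N c J z) \<le> (\<Sum>\<alpha>\<in>J. cmod (c \<alpha>) * R ^ mdeg n \<alpha>)"
proof -
  have "0 \<le> R" using assms[of 0] norm_ge_zero order_trans by blast
  have "cmod (\<Sum>\<alpha>\<in>J. c \<alpha> * monom n \<alpha> z) \<le> (\<Sum>\<alpha>\<in>J. cmod (c \<alpha>) * cmod (monom n \<alpha> z))"
    by (rule order_trans[OF norm_sum]) (simp add: norm_mult)
  also have "\<dots> \<le> (\<Sum>\<alpha>\<in>J. cmod (c \<alpha>) * R ^ mdeg n \<alpha>)"
    using norm_monom_le[OF assms] by (intro sum_mono mult_left_mono) auto
  finally show ?thesis using \<open>0 \<le> R\<close> by (simp add: poly_fun_def sum_nonneg)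
qed

lemma poly_space_subset_linfty:
  assumes "norm_on n N"
  shows "poly_space n N J \<subseteq> linfty (unit_ball n N)"
proof
  fix y assume "y \<in> poly_space n N J"
  then obtain c where y: "y = poly_fun n N c J" by (auto simp: mem_poly_space_iff)
  obtain R where "R > 0" and R: "\<And>z i. z \<in> unit_ball n N \<Longrightarrow> cmod (z i) \<le> R"
    by (rule unit_ball_coords_bounded[OF assms(1)]) blast
  then have "\<forall>z\<in>unit_ball n N. cmod (y z) \<le> (\<Sum>\<alpha>\<in>J. cmod (c \<alpha>) * R ^ mdeg n \<alpha>)"
    by (auto simp: y intro!: norm_poly_fun_le)
  then show "y \<in> linfty (unit_ball n N)" unfolding linfty_iff by (auto simp: y poly_fun_def)
qed

lemma poly_space_mono:
  assumes "J' \<subseteq> J" "finite J"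
  shows "poly_space n N J' \<subseteq> poly_space n N J"
proof
  fix y assume "y \<in> poly_space n N J'"
  then obtain c where y: "y = poly_fun n N c J'" by (auto simp: mem_poly_space_iff)
  have restrict: "(\<Sum>\<alpha>\<in>J. (if \<alpha> \<in> J' then c \<alpha> else 0) * monom n \<alpha> z) = (\<Sum>\<alpha>\<in>J'. c \<alpha> * monom n \<alpha> z)"
    for z
    using assms by (simp add: if_distrib[of "\<lambda>x. x * _"] sum.inter_restrict[symmetric]
        Int_absorb1 cong: if_cong)
  have "y = poly_fun n N (\<lambda>\<alpha>. if \<alpha> \<in> J' then c \<alpha> else 0) J"
    unfolding y poly_fun_def restrict by (rule refl)
  then show "y \<in> poly_space n N J" by (simp add: poly_fun_in_poly_space)
qed

lemma sum_poly_fun_Jk: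
  assumes "finite J" "\<forall>\<alpha>\<in>J. mdeg n \<alpha> \<le> m"
  shows "(\<lambda>z. \<Sum>k\<in>{0..m}. poly_fun n N (c k) (Jk n J k) z) = poly_fun n N (\<lambda>\<alpha>. c (mdeg n \<alpha>) \<alpha>) J"
proof
  fix z
  have "(\<Sum>k\<in>{0..m}. \<Sum>\<alpha>\<in>Jk n J k. c k \<alpha> * monom n \<alpha> z)
      = (\<Sum>k\<in>{0..m}. \<Sum>\<alpha>\<in>J. if mdeg n \<alpha> = k then c k \<alpha> * monom n \<alpha> z else 0)"
    using assms(1) by (simp add: Jk_def sum.inter_filter)
  also have "\<dots> = (\<Sum>\<alpha>\<in>J. \<Sum>k\<in>{0..m}. if mdeg n \<alpha> = k then c k \<alpha> * monom n \<alpha> z else 0)"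
    by (rule sum.swap)
  also have "\<dots> = (\<Sum>\<alpha>\<in>J. c (mdeg n \<alpha>) \<alpha> * monom n \<alpha> z)"
    using assms(2) by (intro sum.cong) auto
  finally show "(\<Sum>k\<in>{0..m}. poly_fun n N (c k) (Jk n J k) z) = poly_fun n N (\<lambda>\<alpha>. c (mdeg n \<alpha>) \<alpha>) J z"
    by (simp add: poly_fun_def)
qed

section \<open>Homogeneous parts via roots of unity\<close>

definition root_unity :: "nat \<Rightarrow> complex" where
  "root_unity d = exp (2 * of_real pi * \<i> / of_nat d)"

lemma root_unity_power: "root_unity d ^ t = exp (2 * of_real pi * \<i> * of_nat t / of_nat d)"
  unfolding root_unity_def by (simp add: exp_of_nat_mult[symmetric] field_simps)

lemma norm_root_unity_power [simp]: "cmod (root_unity d ^ t) = 1"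
  unfolding root_unity_power by (simp add: norm_exp_eq_Re)

lemma sum_root_unity_power:
  assumes "d \<ge> 1"
  shows "(\<Sum>j<d. root_unity d ^ (j * t)) = (if d dvd t then of_nat d else 0)"
proof -
  have pow: "root_unity d ^ (j * t) = (root_unity d ^ t) ^ j" for j
    by (simp add: power_mult[symmetric] mult.commute)
  have one: "root_unity d ^ t = 1 \<longleftrightarrow> d dvd t"
    using complex_root_unity_eq_1[OF assms] by (simp add: root_unity_power)
  show ?thesis
  proof (cases "d dvd t")
    case False
    have "root_unity d ^ d = 1" using complex_root_unity_eq_1[OF assms, of d] by (simp add: root_unity_power)
    then have "(root_unity d ^ t) ^ d = 1" by (metis power_mult mult.commute power_one)
    then show ?thesis using False one by (simp add: pow sum_gp_strict)
  next
    case True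
    then show ?thesis using one by (simp add: pow)
  qed
qed

lemma sum_root_unity_delta:
  assumes "a < d" "b < d"
  shows "(\<Sum>j<d. root_unity d ^ (j * (d - a + b))) = (if a = b then of_nat d else 0)"
proof -
  have "d dvd (d - a + b) \<longleftrightarrow> a = b"
  proof
    assume "d dvd (d - a + b)"
    then obtain q where q: "d - a + b = d * q" by (auto elim: dvdE)
    have "d * q < d * 2" "0 < d * q" using q assms by arith+
    then have "q = 1" by simp
    with q assms show "a = b" by simp
  qed (use assms in simp)
  then show ?thesis using sum_root_unity_power[of d "d - a + b"] assms by simp
qed

lemma sum_root_unity_filter:
  assumes "finite J" "k < d" "\<And>\<alpha>. \<alpha> \<in> J \<Longrightarrow> deg \<alpha> < d"
  shows "(\<Sum>j<d. root_unity d ^ (j * (d - k)) * (\<Sum>\<alpha>\<in>J. a \<alpha> * (root_unity d ^ j) ^ deg \<alpha>))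
       = of_nat d * (\<Sum>\<alpha>\<in>{\<alpha> \<in> J. deg \<alpha> = k}. a \<alpha>)"
proof -
  let ?\<omega> = "root_unity d"
  have "?\<omega> ^ (j * (d - k)) * (\<Sum>\<alpha>\<in>J. a \<alpha> * (?\<omega> ^ j) ^ deg \<alpha>)
      = (\<Sum>\<alpha>\<in>J. a \<alpha> * ?\<omega> ^ (j * (d - k + deg \<alpha>)))" for j
    by (simp add: sum_distrib_left power_mult[symmetric] power_add[symmetric] distrib_left mult_ac
        add.commute)
  then have "(\<Sum>j<d. ?\<omega> ^ (j * (d - k)) * (\<Sum>\<alpha>\<in>J. a \<alpha> * (?\<omega> ^ j) ^ deg \<alpha>))
      = (\<Sum>\<alpha>\<in>J. a \<alpha> * (\<Sum>j<d. ?\<omega> ^ (j * (d - k + deg \<alpha>))))"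
    by (simp add: sum.swap[of _ J] sum_distrib_left)
  also have "\<dots> = (\<Sum>\<alpha>\<in>J. of_nat d * (if deg \<alpha> = k then a \<alpha> else 0))"
    using sum_root_unity_delta[OF assms(2) assms(3)] by (intro sum.cong) auto
  also have "\<dots> = of_nat d * (\<Sum>\<alpha>\<in>{\<alpha> \<in> J. deg \<alpha> = k}. a \<alpha>)"
    using assms(1) by (simp add: sum.inter_filter sum_distrib_left[symmetric])
  finally show ?thesis .
qed

(* With w = root_unity d we have w^(j(d - k)) = w^(-jk), so homog_part d k f z is the k-th
   discrete Fourier coefficient of j -> f (w^j z); for a polynomial of degree < d this is
   exactly its k-homogeneous part. *)

definition homog_part :: "nat \<Rightarrow> nat \<Rightarrow> (('i \<Rightarrow> complex) \<Rightarrow> complex) \<Rightarrow> ('i \<Rightarrow> complex) \<Rightarrow> complex" where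
  "homog_part d k f =
     (\<lambda>z. (\<Sum>j<d. root_unity d ^ (j * (d - k)) * f (\<lambda>i. root_unity d ^ j * z i)) / of_nat d)"

lemma homog_part_contraction:
  assumes "circled B" "B \<noteq> {}" "d \<ge> 1"
  shows "linfty_contraction B (homog_part d k)"
proof -
  have rot: "(\<lambda>i. root_unity d ^ j * z i) \<in> B \<longleftrightarrow> z \<in> B" for j z
    using assms(1) by (simp add: circled_def)
  have bound: "cmod (homog_part d k f z) \<le> supnorm B f" if f: "f \<in> linfty B" and z: "z \<in> B" for f z
  proof -
    have "cmod (\<Sum>j<d. root_unity d ^ (j * (d - k)) * f (\<lambda>i. root_unity d ^ j * z i))
        \<le> (\<Sum>j<d. supnorm B f)"
      using supnorm_upper[OF f] rot z
      by (intro order_trans[OF norm_sum] sum_mono) (simp add: norm_mult)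
    then show ?thesis using assms(3) by (simp add: homog_part_def norm_divide field_simps)
  qed
  have out: "homog_part d k f z = 0" if "f \<in> linfty B" "z \<notin> B" for f z
    using that rot by (simp add: homog_part_def linfty_def)
  show ?thesis
    unfolding linfty_contraction_def linfty_linear_def
  proof (intro conjI ballI allI)
    fix f g :: "('a \<Rightarrow> complex) \<Rightarrow> complex"
    show "homog_part d k (\<lambda>z. f z + g z) = (\<lambda>z. homog_part d k f z + homog_part d k g z)"
      by (simp add: homog_part_def distrib_left sum.distrib add_divide_distrib)
    fix c
    show "homog_part d k (\<lambda>z. c * f z) = (\<lambda>z. c * homog_part d k f z)"
      by (simp add: homog_part_def sum_distrib_left mult.left_commute)
  next
    fix f assume f: "f \<in> linfty B"
    show "homog_part d k f \<in> linfty B" unfolding linfty_iff using out[OF f] bound[OF f] by blast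
    show "supnorm B (homog_part d k f) \<le> supnorm B f" by (rule supnorm_least[OF assms(2) bound[OF f]])
  qed
qed

lemma homog_part_poly_fun:
  assumes "norm_on n N" "finite J" "\<forall>\<alpha>\<in>J. mdeg n \<alpha> \<le> m" "k \<le> m"
  shows "homog_part (Suc m) k (poly_fun n N c J) = poly_fun n N c (Jk n J k)"
proof
  fix z
  let ?\<omega> = "root_unity (Suc m)"
  have rot: "(\<lambda>i. ?\<omega> ^ j * z i) \<in> unit_ball n N \<longleftrightarrow> z \<in> unit_ball n N" for j
    using circled_unit_ball[OF assms(1)] by (simp add: circled_def)
  show "homog_part (Suc m) k (poly_fun n N c J) z = poly_fun n N c (Jk n J k) z"
  proof (cases "z \<in> unit_ball n N")
    case False
    then show ?thesis using rot by (simp add: homog_part_def poly_fun_def)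
  next
    case True
    have rotated: "poly_fun n N c J (\<lambda>i. ?\<omega> ^ j * z i)
        = (\<Sum>\<alpha>\<in>J. c \<alpha> * monom n \<alpha> z * (?\<omega> ^ j) ^ mdeg n \<alpha>)" for j
    proof -
      have "poly_fun n N c J (\<lambda>i. ?\<omega> ^ j * z i) = (\<Sum>\<alpha>\<in>J. c \<alpha> * monom n \<alpha> (\<lambda>i. ?\<omega> ^ j * z i))"
        using True rot by (simp add: poly_fun_def)
      also have "\<dots> = (\<Sum>\<alpha>\<in>J. c \<alpha> * monom n \<alpha> z * (?\<omega> ^ j) ^ mdeg n \<alpha>)"
        unfolding monom_scale by (simp add: mult_ac)
      finally show ?thesis .
    qed
    have "homog_part (Suc m) k (poly_fun n N c J) z
        = (\<Sum>j<Suc m. ?\<omega> ^ (j * (Suc m - k)) * (\<Sum>\<alpha>\<in>J. c \<alpha> * monom n \<alpha> z * (?\<omega> ^ j) ^ mdeg n \<alpha>))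
          / of_nat (Suc m)"
      unfolding homog_part_def by (simp only: rotated)
    also have "\<dots> = (\<Sum>\<alpha>\<in>Jk n J k. c \<alpha> * monom n \<alpha> z)"
    proof -
      have "(\<Sum>j<Suc m. ?\<omega> ^ (j * (Suc m - k)) * (\<Sum>\<alpha>\<in>J. c \<alpha> * monom n \<alpha> z * (?\<omega> ^ j) ^ mdeg n \<alpha>))
          = of_nat (Suc m) * (\<Sum>\<alpha>\<in>Jk n J k. c \<alpha> * monom n \<alpha> z)"
        unfolding Jk_def using assms(3,4) by (intro sum_root_unity_filter[OF assms(2)]) auto
      then show ?thesis by (simp del: of_nat_Suc)
    qed
    finally show ?thesis using True by (simp add: poly_fun_def)
  qed
qed

section \<open>Existence of bounded projections\<close>

definition torus_point :: "nat \<Rightarrow> nat \<Rightarrow> real \<Rightarrow> (nat \<Rightarrow> nat) \<Rightarrow> nat \<Rightarrow> complex" where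
  "torus_point n d r j = (\<lambda>i. if i < n then of_real r * root_unity d ^ j i else 0)"

definition fourier_coeff ::
    "nat \<Rightarrow> nat \<Rightarrow> real \<Rightarrow> (nat \<Rightarrow> nat) \<Rightarrow> ((nat \<Rightarrow> complex) \<Rightarrow> complex) \<Rightarrow> complex" where
  "fourier_coeff n d r \<alpha> f =
     (\<Sum>j\<in>PiE {..<n} (\<lambda>_. {..<d}). (\<Prod>i<n. root_unity d ^ (j i * (d - \<alpha> i))) * f (torus_point n d r j))
       / (of_nat d ^ n * of_real r ^ mdeg n \<alpha>)"

lemma fourier_coeff_monom:
  assumes "\<alpha> \<in> mindex n" "\<beta> \<in> mindex n" "\<forall>i<n. \<alpha> i < d \<and> \<beta> i < d"
  shows "(\<Sum>j\<in>PiE {..<n} (\<lambda>_. {..<d}).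
            (\<Prod>i<n. root_unity d ^ (j i * (d - \<alpha> i))) * monom n \<beta> (torus_point n d r j))
       = (if \<alpha> = \<beta> then of_nat d ^ n * of_real r ^ mdeg n \<beta> else 0)"
proof -
  let ?\<omega> = "root_unity d"
  have "(\<Prod>i<n. ?\<omega> ^ (j i * (d - \<alpha> i))) * monom n \<beta> (torus_point n d r j)
      = of_real r ^ mdeg n \<beta> * (\<Prod>i<n. ?\<omega> ^ (j i * (d - \<alpha> i + \<beta> i)))" for j
  proof -
    have "monom n \<beta> (torus_point n d r j) = (\<Prod>i<n. of_real r ^ \<beta> i * ?\<omega> ^ (j i * \<beta> i))"
      unfolding monom_def torus_point_def by (intro prod.cong refl) (simp add: power_mult_distrib power_mult)
    then show ?thesis
      by (simp add: prod.distrib mdeg_def power_sum power_add distrib_left mult_ac)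
  qed
  then have "(\<Sum>j\<in>PiE {..<n} (\<lambda>_. {..<d}).
        (\<Prod>i<n. ?\<omega> ^ (j i * (d - \<alpha> i))) * monom n \<beta> (torus_point n d r j))
      = of_real r ^ mdeg n \<beta> * (\<Prod>i<n. \<Sum>t<d. ?\<omega> ^ (t * (d - \<alpha> i + \<beta> i)))"
    by (simp add: sum_distrib_left prod_sum_PiE)
  also have "(\<Prod>i<n. \<Sum>t<d. ?\<omega> ^ (t * (d - \<alpha> i + \<beta> i))) = (\<Prod>i<n. if \<alpha> i = \<beta> i then of_nat d else 0)"
    using assms(3) by (intro prod.cong refl) (simp add: sum_root_unity_delta)
  also have "\<dots> = (if \<alpha> = \<beta> then of_nat d ^ n else 0)"
  proof (cases "\<alpha> = \<beta>")
    case False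
    then obtain i where i: "\<alpha> i \<noteq> \<beta> i" by auto
    have "i < n" by (rule ccontr) (use i assms(1,2) in \<open>auto simp: mindex_def\<close>)
    with i have "(\<Prod>i<n. if \<alpha> i = \<beta> i then (of_nat d :: complex) else 0) = 0"
      by (intro prod_zero) auto
    with False show ?thesis by simp
  qed simp
  finally show ?thesis by simp
qed

lemma fourier_coeff_poly_fun:
  assumes "finite J" "J \<subseteq> mindex n" "\<forall>\<alpha>\<in>J. \<forall>i<n. \<alpha> i < d" "\<alpha> \<in> J"
    and torus: "\<And>j. torus_point n d r j \<in> unit_ball n N" and "r \<noteq> 0" "d \<ge> 1"
  shows "fourier_coeff n d r \<alpha> (poly_fun n N c J) = c \<alpha>"
proof -
  let ?P = "PiE {..<n} (\<lambda>_. {..<d})" and ?w = "\<lambda>j. \<Prod>i<n. root_unity d ^ (j i * (d - \<alpha> i))"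
  have "(\<Sum>j\<in>?P. ?w j * poly_fun n N c J (torus_point n d r j))
      = (\<Sum>j\<in>?P. \<Sum>\<beta>\<in>J. c \<beta> * (?w j * monom n \<beta> (torus_point n d r j)))"
    using torus by (simp add: poly_fun_def sum_distrib_left sum_distrib_right mult_ac)
  also have "\<dots> = (\<Sum>\<beta>\<in>J. c \<beta> * (\<Sum>j\<in>?P. ?w j * monom n \<beta> (torus_point n d r j)))"
    by (simp add: sum.swap[of _ ?P] sum_distrib_left)
  also have "\<dots> = (\<Sum>\<beta>\<in>J. c \<beta> * (if \<alpha> = \<beta> then of_nat d ^ n * of_real r ^ mdeg n \<beta> else 0))"
    using assms(2-4) by (intro sum.cong refl) (simp add: fourier_coeff_monom subsetD)
  also have "\<dots> = c \<alpha> * (of_nat d ^ n * of_real r ^ mdeg n \<alpha>)"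
    using assms(1,4) by (simp add: if_distrib[of "\<lambda>x. c _ * x"] sum.delta cong: if_cong)
  finally show ?thesis using assms(6,7) by (simp add: fourier_coeff_def)
qed

lemma norm_fourier_coeff_le:
  assumes "f \<in> linfty B" "\<And>j. torus_point n d r j \<in> B" "r > 0" "d \<ge> 1"
  shows "cmod (fourier_coeff n d r \<alpha> f) \<le> supnorm B f / r ^ mdeg n \<alpha>"
proof -
  let ?P = "PiE {..<n} (\<lambda>_::nat. {..<d})"
  have "cmod (\<Sum>j\<in>?P. (\<Prod>i<n. root_unity d ^ (j i * (d - \<alpha> i))) * f (torus_point n d r j))
      \<le> (\<Sum>j\<in>?P. supnorm B f)"
    using supnorm_upper[OF assms(1) assms(2)]
    by (intro order_trans[OF norm_sum] sum_mono) (simp add: norm_mult prod_norm[symmetric])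
  also have "\<dots> = real d ^ n * supnorm B f" by (simp add: card_PiE)
  finally show ?thesis
    using assms(3,4) by (simp add: fourier_coeff_def norm_divide norm_mult norm_power field_simps)
qed

(* The coefficients of a polynomial are recovered by a discrete Fourier transform over the points
   of a polytorus inside the ball.  This gives some bounded projection onto P_J(X_n), so the
   infimum defining its projection constant is taken over a nonempty set. *)

lemma is_projection_fourier:
  assumes nN: "norm_on n N" and J: "finite J" "J \<subseteq> mindex n" "\<forall>\<alpha>\<in>J. \<forall>i<n. \<alpha> i < d"
    and "d \<ge> 1" "r > 0" and torus: "\<And>j. torus_point n d r j \<in> unit_ball n N"
    and R: "\<And>z i. z \<in> unit_ball n N \<Longrightarrow> cmod (z i) \<le> R"
  shows "is_projection (unit_ball n N) (poly_space n N J)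
           (\<lambda>f. poly_fun n N (\<lambda>\<alpha>. fourier_coeff n d r \<alpha> f) J) (\<Sum>\<alpha>\<in>J. R ^ mdeg n \<alpha> / r ^ mdeg n \<alpha>)"
    (is "is_projection ?B _ ?Q ?C")
  unfolding is_projection_def linfty_linear_def
proof (intro conjI ballI allI)
  fix f g :: "(nat \<Rightarrow> complex) \<Rightarrow> complex" and c
  show "?Q (\<lambda>z. f z + g z) = (\<lambda>z. ?Q f z + ?Q g z)"
    by (simp add: poly_fun_def fourier_coeff_def fun_eq_iff distrib_left distrib_right
        sum.distrib add_divide_distrib)
  show "?Q (\<lambda>z. c * f z) = (\<lambda>z. c * ?Q f z)"
    by (simp add: poly_fun_def fourier_coeff_def fun_eq_iff sum_distrib_left mult_ac)
  show "?Q f \<in> poly_space n N J" by (rule poly_fun_in_poly_space)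
next
  fix y assume "y \<in> poly_space n N J"
  then obtain c where y: "y = poly_fun n N c J" by (auto simp: mem_poly_space_iff)
  have "fourier_coeff n d r \<alpha> (poly_fun n N c J) = c \<alpha>" if "\<alpha> \<in> J" for \<alpha>
    using assms that by (simp add: fourier_coeff_poly_fun)
  then show "?Q y = y" unfolding y by (rule poly_fun_cong)
next
  fix f assume f: "f \<in> linfty ?B"
  have "?B \<noteq> {}" using zero_in_unit_ball[OF nN] by blast
  have "cmod (?Q f z) \<le> ?C * supnorm ?B f" if z: "z \<in> ?B" for z
  proof -
    have "cmod (?Q f z) \<le> (\<Sum>\<alpha>\<in>J. cmod (fourier_coeff n d r \<alpha> f) * R ^ mdeg n \<alpha>)"
      using R[OF z] by (rule norm_poly_fun_le)
    also have "\<dots> \<le> (\<Sum>\<alpha>\<in>J. supnorm ?B f / r ^ mdeg n \<alpha> * R ^ mdeg n \<alpha>)"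
      using norm_fourier_coeff_le[OF f torus \<open>r > 0\<close> \<open>d \<ge> 1\<close>] order_trans[OF norm_ge_zero R[OF z]]
      by (intro sum_mono mult_right_mono zero_le_power) auto
    also have "\<dots> = ?C * supnorm ?B f" by (simp add: sum_distrib_left mult.commute)
    finally show ?thesis .
  qed
  then show "supnorm ?B (?Q f) \<le> ?C * supnorm ?B f" by (rule supnorm_least[OF \<open>?B \<noteq> {}\<close>])
qed

lemma poly_space_has_projection:
  assumes nN: "norm_on n N" and J: "J \<subseteq> mindex n" "\<forall>\<alpha>\<in>J. mdeg n \<alpha> \<le> m"
  shows "projection_norms (unit_ball n N) (poly_space n N J) \<noteq> {}"
proof -
  have "\<alpha> i < Suc m" if "\<alpha> \<in> J" "i < n" for \<alpha> i
    using coord_le_mdeg[OF that(2), of \<alpha>] bspec[OF J(2) that(1)] by simp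
  then have lt: "\<forall>\<alpha>\<in>J. \<forall>i<n. \<alpha> i < Suc m" by blast
  obtain r where r: "r > 0" "\<And>z. z \<in> Cn n \<Longrightarrow> (\<forall>i<n. cmod (z i) \<le> r) \<Longrightarrow> z \<in> unit_ball n N"
    by (rule polydisc_subset_unit_ball[OF nN]) blast
  obtain R where R: "R > 0" "\<And>z i. z \<in> unit_ball n N \<Longrightarrow> cmod (z i) \<le> R"
    by (rule unit_ball_coords_bounded[OF nN]) blast
  have torus: "torus_point n (Suc m) r j \<in> unit_ball n N" for j
    using r by (intro r(2)) (simp_all add: torus_point_def Cn_def norm_mult)
  have "is_projection (unit_ball n N) (poly_space n N J)
      (\<lambda>f. poly_fun n N (\<lambda>\<alpha>. fourier_coeff n (Suc m) r \<alpha> f) J) (\<Sum>\<alpha>\<in>J. R ^ mdeg n \<alpha> / r ^ mdeg n \<alpha>)"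
    by (rule is_projection_fourier[OF nN finite_index_set[OF J] J(1) lt]) (use r(1) torus R(2) in auto)
  moreover have "(\<Sum>\<alpha>\<in>J. R ^ mdeg n \<alpha> / r ^ mdeg n \<alpha>) \<ge> 0" using r(1) R(1) by (simp add: sum_nonneg)
  ultimately show ?thesis by (auto simp: projection_norms_def)
qed

section \<open>Comparison with the homogeneous parts\<close>

lemma Jk_subset: "Jk n J k \<subseteq> J"
  by (auto simp: Jk_def)

lemma Jk_Jk [simp]: "Jk n (Jk n J k) k = Jk n J k"
  by (auto simp: Jk_def)

lemma lambdaP_Jk_le:
  assumes nN: "norm_on n N" and J: "J \<subseteq> mindex n" "\<forall>\<alpha>\<in>J. mdeg n \<alpha> \<le> m" and k: "k \<le> m"
  shows "lambdaP n N (Jk n J k) \<le> lambdaP n N J"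
  unfolding lambdaP_def
proof (rule proj_const_mono_retraction)
  have fJ: "finite J" by (rule finite_index_set[OF J])
  show "linfty_contraction (unit_ball n N) (homog_part (Suc m) k)"
    using circled_unit_ball[OF nN] zero_in_unit_ball[OF nN] by (intro homog_part_contraction) auto
  show "poly_space n N J \<subseteq> linfty (unit_ball n N)" by (rule poly_space_subset_linfty[OF nN])
  show "poly_space n N (Jk n J k) \<subseteq> poly_space n N J" by (rule poly_space_mono[OF Jk_subset fJ])
  show "projection_norms (unit_ball n N) (poly_space n N J) \<noteq> {}"
    by (rule poly_space_has_projection[OF nN J])
  fix y
  show "homog_part (Suc m) k y \<in> poly_space n N (Jk n J k)" if "y \<in> poly_space n N J"
    using that homog_part_poly_fun[OF nN fJ J(2) k]
    by (auto simp: mem_poly_space_iff)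
  have "finite (Jk n J k)" "\<forall>\<alpha>\<in>Jk n J k. mdeg n \<alpha> \<le> m"
    using finite_subset[OF Jk_subset fJ] J(2) Jk_subset by blast+
  then show "homog_part (Suc m) k y = y" if "y \<in> poly_space n N (Jk n J k)"
    using that homog_part_poly_fun[OF nN _ _ k] by (auto simp: mem_poly_space_iff)
qed

lemma lambdaP_le_sum_Jk:
  assumes nN: "norm_on n N" and J: "J \<subseteq> mindex n" "\<forall>\<alpha>\<in>J. mdeg n \<alpha> \<le> m"
  shows "lambdaP n N J \<le> (\<Sum>k\<in>{0..m}. lambdaP n N (Jk n J k))"
  unfolding lambdaP_def
proof (rule proj_const_sum_le[where T = "\<lambda>k. homog_part (Suc m) k"])
  have fJ: "finite J" by (rule finite_index_set[OF J])
  have Jk: "Jk n J k \<subseteq> mindex n" "\<forall>\<alpha>\<in>Jk n J k. mdeg n \<alpha> \<le> m" for k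
    using J Jk_subset by blast+
  show "finite {0..m}" by simp
  show "unit_ball n N \<noteq> {}" using zero_in_unit_ball[OF nN] by blast
  fix k
  show "linfty_contraction (unit_ball n N) (homog_part (Suc m) k)"
    using circled_unit_ball[OF nN] zero_in_unit_ball[OF nN] by (intro homog_part_contraction) auto
  show "projection_norms (unit_ball n N) (poly_space n N (Jk n J k)) \<noteq> {}"
    by (rule poly_space_has_projection[OF nN Jk])
  show "poly_space n N (Jk n J k) \<subseteq> linfty (unit_ball n N)"
    by (rule poly_space_subset_linfty[OF nN])
  fix y assume "y \<in> poly_space n N J"
  then obtain c where y: "y = poly_fun n N c J" by (auto simp: mem_poly_space_iff)
  show "homog_part (Suc m) k y \<in> poly_space n N (Jk n J k)" if "k \<in> {0..m}"
    using that by (simp add: y homog_part_poly_fun[OF nN fJ J(2)] poly_fun_in_poly_space)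
  show "(\<lambda>z. \<Sum>k\<in>{0..m}. homog_part (Suc m) k y z) = y"
    using sum_poly_fun_Jk[OF fJ J(2), of N "\<lambda>_. c"] by (simp add: y homog_part_poly_fun[OF nN fJ J(2)])
next
  fix g assume "\<And>k. k \<in> {0..m} \<Longrightarrow> g k \<in> poly_space n N (Jk n J k)"
  then obtain c where "\<And>k. k \<in> {0..m} \<Longrightarrow> g k = poly_fun n N (c k) (Jk n J k)"
    unfolding mem_poly_space_iff by metis
  then have "(\<lambda>z. \<Sum>k\<in>{0..m}. g k z) = (\<lambda>z. \<Sum>k\<in>{0..m}. poly_fun n N (c k) (Jk n J k) z)"
    by (intro ext sum.cong) auto
  also have "\<dots> = poly_fun n N (\<lambda>\<alpha>. c (mdeg n \<alpha>) \<alpha>) J"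
    by (rule sum_poly_fun_Jk[OF finite_index_set[OF J] J(2)])
  finally show "(\<lambda>z. \<Sum>k\<in>{0..m}. g k z) \<in> poly_space n N J" by (simp add: poly_fun_in_poly_space)
qed

lemma one_le_lambdaP:
  assumes nN: "norm_on n N" and J: "J \<subseteq> mindex n" "\<forall>\<alpha>\<in>J. mdeg n \<alpha> \<le> m" and "\<alpha>\<^sub>0 \<in> J"
  shows "1 \<le> lambdaP n N J"
proof -
  obtain r where r: "r > 0" "\<And>z. z \<in> Cn n \<Longrightarrow> (\<forall>i<n. cmod (z i) \<le> r) \<Longrightarrow> z \<in> unit_ball n N"
    by (rule polydisc_subset_unit_ball[OF nN]) blast
  define z\<^sub>0 where "z\<^sub>0 = (\<lambda>i. if i < n then complex_of_real r else 0)"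
  define y where "y = poly_fun n N (\<lambda>\<alpha>. if \<alpha> = \<alpha>\<^sub>0 then 1 else 0) J"
  have y: "y \<in> poly_space n N J" by (simp add: y_def poly_fun_in_poly_space)
  have z\<^sub>0: "z\<^sub>0 \<in> unit_ball n N" using r by (intro r(2)) (auto simp: z\<^sub>0_def Cn_def)
  have "monom n \<alpha>\<^sub>0 z\<^sub>0 = (\<Prod>i<n. complex_of_real r ^ \<alpha>\<^sub>0 i)" unfolding monom_def z\<^sub>0_def by simp
  then have "y z\<^sub>0 \<noteq> 0"
    using z\<^sub>0 assms(4) finite_index_set[OF J] r(1)
    by (simp add: y_def poly_fun_def if_distrib[of "\<lambda>x. x * _"] sum.delta cong: if_cong)
  moreover have "y \<in> linfty (unit_ball n N)"
    using y poly_space_subset_linfty[OF nN] by blast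
  ultimately show ?thesis
    unfolding lambdaP_def by (intro one_le_proj_const[OF poly_space_has_projection[OF nN J] y _ z\<^sub>0])
qed

lemma lambdaP_Jk_bounds:
  assumes "norm_on n N" "J \<subseteq> mindex n" "\<forall>\<alpha>\<in>J. mdeg n \<alpha> \<le> m"
  shows "Max ((\<lambda>k. lambdaP n N (Jk n J k)) ` {0..m}) \<le> lambdaP n N J"
    and "lambdaP n N J \<le> real (m + 1) * Max ((\<lambda>k. lambdaP n N (Jk n J k)) ` {0..m})"
proof -
  let ?M = "Max ((\<lambda>k. lambdaP n N (Jk n J k)) ` {0..m})"
  show "?M \<le> lambdaP n N J" using lambdaP_Jk_le[OF assms] by (subst Max_le_iff) auto
  have "lambdaP n N J \<le> (\<Sum>k\<in>{0..m}. lambdaP n N (Jk n J k))" by (rule lambdaP_le_sum_Jk[OF assms])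
  also have "\<dots> \<le> real (card {0..m}) * ?M" by (rule sum_bounded_above) simp
  finally show "lambdaP n N J \<le> real (m + 1) * ?M" by simp
qed

section \<open>Banach sequence lattices\<close>

lemma finite_support_in_lattice:
  assumes L: "banach_seq_lattice X NX" and w: "\<And>k. k \<ge> n \<Longrightarrow> w k = 0"
  shows "w \<in> X"
  using w
proof (induction n arbitrary: w)
  case 0
  then have "w = (\<lambda>i. 0)" by auto
  then show ?case using L by (simp add: banach_seq_lattice_def)
next
  case (Suc n)
  have "(\<lambda>k. if k < n then w k else 0) \<in> X" by (rule Suc.IH) simp
  moreover have "(\<lambda>i. w n * (if i = n then 1 else 0)) \<in> X"
    using L by (simp add: banach_seq_lattice_def)
  ultimately have "(\<lambda>i. (if i < n then w i else 0) + w n * (if i = n then 1 else 0)) \<in> X"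
    using L by (simp add: banach_seq_lattice_def)
  moreover have "(\<lambda>i. (if i < n then w i else 0) + w n * (if i = n then 1 else 0)) = w"
    using Suc.prems by (auto simp: fun_eq_iff not_less_eq_eq)
  ultimately show ?case by simp
qed

lemma norm_on_Xn_norm:
  assumes L: "banach_seq_lattice X NX"
  shows "norm_on n (Xn_norm NX n)"
proof -
  define a where "a = (\<lambda>z::nat \<Rightarrow> complex. \<lambda>k. if k < n then complex_of_real (cmod (z k)) else 0)"
  have aX: "a z \<in> X" for z by (rule finite_support_in_lattice[OF L, where n = n]) (simp add: a_def)
  have Xn: "Xn_norm NX n z = NX (a z)" for z by (simp add: Xn_norm_def a_def)
  have zero: "NX x = 0 \<longleftrightarrow> x = (\<lambda>i. 0)" if "x \<in> X" for x
    using L that unfolding banach_seq_lattice_def by blast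
  have scale: "NX (\<lambda>i. c * x i) = cmod c * NX x" if "x \<in> X" for x c
    using L that unfolding banach_seq_lattice_def by blast
  have add: "(\<lambda>i. x i + y i) \<in> X \<and> NX (\<lambda>i. x i + y i) \<le> NX x + NX y" if "x \<in> X" "y \<in> X" for x y
    using L that unfolding banach_seq_lattice_def by blast
  have ideal: "NX y \<le> NX x" if "x \<in> X" "\<And>i. cmod (y i) \<le> cmod (x i)" for x y
    using L that unfolding banach_seq_lattice_def by blast
  show ?thesis
    unfolding norm_on_def
  proof (intro conjI ballI allI)
    fix z assume "z \<in> Cn n"
    then have "a z = (\<lambda>i. 0) \<longleftrightarrow> z = (\<lambda>i. 0)" by (auto simp: a_def Cn_def fun_eq_iff) (metis not_le)
    then show "Xn_norm NX n z = 0 \<longleftrightarrow> z = (\<lambda>i. 0)" by (simp add: Xn zero[OF aX])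
  next
    fix z c
    have "a (\<lambda>i. c * z i) = (\<lambda>i. complex_of_real (cmod c) * a z i)" by (auto simp: a_def norm_mult)
    then show "Xn_norm NX n (\<lambda>i. c * z i) = cmod c * Xn_norm NX n z" by (simp add: Xn scale[OF aX])
  next
    fix z w
    have "cmod (a (\<lambda>i. z i + w i) i) \<le> cmod (a z i + a w i)" for i
      by (simp add: a_def norm_triangle_ineq flip: of_real_add)
    then have "NX (a (\<lambda>i. z i + w i)) \<le> NX (\<lambda>i. a z i + a w i)"
      using add[OF aX aX] by (intro ideal) auto
    also have "\<dots> \<le> NX (a z) + NX (a w)" using add[OF aX aX] by blast
    finally show "Xn_norm NX n (\<lambda>i. z i + w i) \<le> Xn_norm NX n z + Xn_norm NX n w" by (simp add: Xn)
  qed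
qed

lemma Jk_Ple: "k \<le> m \<Longrightarrow> Jk n (Ple n m) k = Peq n k"
  by (auto simp: Jk_def Ple_def Peq_def)

lemma lambdaP_Ple_ratio_bounds:
  fixes m :: nat
  assumes "norm_on n N"
  defines "M \<equiv> Max ((\<lambda>k. lambdaP n N (Peq n k)) ` {0..m})"
  shows "1 \<le> lambdaP n N (Ple n m) powr (1 / real m) / M powr (1 / real m)"
    and "lambdaP n N (Ple n m) powr (1 / real m) / M powr (1 / real m) \<le> (real m + 1) powr (1 / real m)"
proof -
  let ?L = "lambdaP n N (Ple n m)"
  have Max_eq: "Max ((\<lambda>k. lambdaP n N (Jk n (Ple n m) k)) ` {0..m}) = M"
    unfolding M_def by (intro arg_cong[where f = Max] image_cong) (simp_all add: Jk_Ple)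
  have "Ple n m \<subseteq> mindex n" "\<forall>\<alpha>\<in>Ple n m. mdeg n \<alpha> \<le> m" by (auto simp: Ple_def)
  note bounds = lambdaP_Jk_bounds[OF assms(1) this, unfolded Max_eq]
  have "1 \<le> lambdaP n N (Peq n 0)"
    by (rule one_le_lambdaP[OF assms(1), of _ 0 "\<lambda>_. 0"]) (auto simp: Peq_def mindex_def mdeg_def)
  also have "\<dots> \<le> M" unfolding M_def by (rule Max_ge) auto
  finally have "1 \<le> ?L / M" "?L / M \<le> real m + 1" using bounds by (simp_all add: field_simps)
  moreover have "?L powr (1 / real m) / M powr (1 / real m) = (?L / M) powr (1 / real m)"
    by (simp add: powr_divide)
  ultimately show "1 \<le> ?L powr (1 / real m) / M powr (1 / real m)"
    and "?L powr (1 / real m) / M powr (1 / real m) \<le> (real m + 1) powr (1 / real m)"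
    using ge_one_powr_ge_zero powr_mono2 by auto
qed

theorem theorem2p4:
  shows "(\<forall>n N J m. norm_on n N \<and> J \<subseteq> mindex n \<and> (\<forall>\<alpha>\<in>J. mdeg n \<alpha> \<le> m) \<longrightarrow>
            Max ((\<lambda>k. lambdaP n N (Jk n J k)) ` {0..m}) \<le> lambdaP n N J \<and>
            lambdaP n N J \<le> real (m + 1) * Max ((\<lambda>k. lambdaP n N (Jk n J k)) ` {0..m}))
       \<and> (\<forall>X NX. banach_seq_lattice X NX \<longrightarrow>
            (\<lambda>m. SUP n\<in>{1..}. lambdaP n (Xn_norm NX n) (Ple n m) powr (1 / real m) /
                 (Max ((\<lambda>k. lambdaP n (Xn_norm NX n) (Peq n k)) ` {0..m})) powr (1 / real m))
            \<longlonglongrightarrow> 1)"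
proof (intro conjI allI impI; (elim conjE)?)
  fix n N J m
  assume "norm_on n N" "J \<subseteq> mindex n" "\<forall>\<alpha>\<in>J. mdeg n \<alpha> \<le> m"
  then show "Max ((\<lambda>k. lambdaP n N (Jk n J k)) ` {0..m}) \<le> lambdaP n N J"
    and "lambdaP n N J \<le> real (m + 1) * Max ((\<lambda>k. lambdaP n N (Jk n J k)) ` {0..m})"
    by (rule lambdaP_Jk_bounds)+
next
  fix X NX assume L: "banach_seq_lattice X NX"
  define \<rho> where "\<rho> = (\<lambda>m n. lambdaP n (Xn_norm NX n) (Ple n m) powr (1 / real m) /
                 (Max ((\<lambda>k. lambdaP n (Xn_norm NX n) (Peq n k)) ` {0..m})) powr (1 / real m))"
  have \<rho>: "1 \<le> \<rho> m n" "\<rho> m n \<le> (real m + 1) powr (1 / real m)" for m n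
    unfolding \<rho>_def using lambdaP_Ple_ratio_bounds[OF norm_on_Xn_norm[OF L]] by blast+
  have "bdd_above (\<rho> m ` {1..})" for m using \<rho> by (intro bdd_aboveI) auto
  then have "1 \<le> (SUP n\<in>{1..}. \<rho> m n)" "(SUP n\<in>{1..}. \<rho> m n) \<le> (real m + 1) powr (1 / real m)"
    for m using \<rho> by (auto intro: cSUP_upper2[of _ _ 1] cSUP_least)
  then have "\<forall>\<^sub>F m in sequentially. 1 \<le> (SUP n\<in>{1..}. \<rho> m n)"
    "\<forall>\<^sub>F m in sequentially. (SUP n\<in>{1..}. \<rho> m n) \<le> (real m + 1) powr (1 / real m)"
    by simp_all
  moreover have "(\<lambda>m. (real m + 1) powr (1 / real m)) \<longlonglongrightarrow> 1" by real_asymp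
  ultimately show "(\<lambda>m. SUP n\<in>{1..}. \<rho> m n) \<longlonglongrightarrow> 1"
    by (rule tendsto_sandwich[OF _ _ tendsto_const])
qed

end
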